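(* If $G$ is a connected graph that is not a path, then the detour sequence of $G$ has a repetition of length at least three; that is, some value occurs at least three times in the detour sequence of $G$.
   Context: All graphs are finite and simple. The order of a path is its number of vertices. For a vertex $v$ of $G$, $\tau(v)$ is the order of a longest path in $G$ having $v$ as an endvertex. The detour sequence of $G$ is the nondecreasing sequence of the values $\tau(v)$, $v\in V(G)$ (one term per vertex). A repetition is a maximal block of at least two consecutive equal terms of the sequence; its length is the number of terms in the block. *)

theory Defs
  imports Main
begin

definition simple_graph :: "'a set \<Rightarrow> ('a \<Rightarrow> 'a \<Rightarrow> bool) \<Rightarrow> bool" where
  "simple_graph V E \<longleftrightarrow> finite V \<and> (\<forall>u v. E u v \<longrightarrow> u \<in> V \<and> v \<in> V)
     \<and> (\<forall>u v. E u v \<longrightarrow> E v u) \<and> (\<forall>v. \<not> E v v)"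

text \<open>A path in G, given as the list of its vertices (order = length).\<close>
definition is_path :: "'a set \<Rightarrow> ('a \<Rightarrow> 'a \<Rightarrow> bool) \<Rightarrow> 'a list \<Rightarrow> bool" where
  "is_path V E p \<longleftrightarrow> p \<noteq> [] \<and> distinct p \<and> set p \<subseteq> V
     \<and> (\<forall>i. Suc i < length p \<longrightarrow> E (p ! i) (p ! Suc i))"

definition connected_graph :: "'a set \<Rightarrow> ('a \<Rightarrow> 'a \<Rightarrow> bool) \<Rightarrow> bool" where
  "connected_graph V E \<longleftrightarrow> V \<noteq> {} \<and>
     (\<forall>u\<in>V. \<forall>v\<in>V. \<exists>p. is_path V E p \<and> hd p = u \<and> last p = v)"

text \<open>G is (isomorphic to) a path graph: its vertices can be listed so that
  two vertices are adjacent iff they are consecutive in the list.\<close>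
definition is_path_graph :: "'a set \<Rightarrow> ('a \<Rightarrow> 'a \<Rightarrow> bool) \<Rightarrow> bool" where
  "is_path_graph V E \<longleftrightarrow> (\<exists>p. distinct p \<and> set p = V \<and>
     (\<forall>i<length p. \<forall>j<length p. E (p ! i) (p ! j) \<longleftrightarrow> (j = Suc i \<or> i = Suc j)))"

definition tau :: "'a set \<Rightarrow> ('a \<Rightarrow> 'a \<Rightarrow> bool) \<Rightarrow> 'a \<Rightarrow> nat" where
  "tau V E v = Max {length p | p. is_path V E p \<and> hd p = v}"

end

theory Submission imports Defs begin

text \<open>Suppose every detour value occurs at most twice and let \<open>P\<close>, with vertices
  \<open>p\<^sub>0, \<dots>, p\<^sub>L\<^sub>-\<^sub>1\<close>, be a longest path. Its two end segments show
  \<open>\<tau>(p\<^sub>i) \<ge> max (i + 1) (L - i)\<close>, so for \<open>2t \<ge> L + 2\<close> the \<open>2(L - t + 1)\<close> vertices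
  \<open>p\<^sub>i\<close> with \<open>i \<le> L - t\<close> or \<open>i \<ge> t - 1\<close> all have \<open>\<tau> \<ge> t\<close>. Since each of the values
  \<open>t, \<dots>, L\<close> is taken at most twice, these are all the vertices with \<open>\<tau> \<ge> t\<close>.
  A vertex off \<open>P\<close> adjacent to \<open>p\<^sub>i\<close>, and the vertex of \<open>P\<close> next to one end of a chord
  \<open>p\<^sub>a p\<^sub>b\<close> (\<open>b \<ge> a + 2\<close>), would have large \<open>\<tau>\<close> without lying at such a position.
  So \<open>P\<close> is a Hamiltonian path without chords, and \<open>G\<close> is a path.\<close>

lemma simple_graph_sym: "simple_graph V E \<Longrightarrow> E u v \<Longrightarrow> E v u"
  by (simp add: simple_graph_def)

lemma is_path_rev:
  assumes "simple_graph V E" "is_path V E p"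
  shows "is_path V E (rev p)"
  unfolding is_path_def
proof (intro conjI allI impI)
  show "rev p \<noteq> []" "distinct (rev p)" "set (rev p) \<subseteq> V"
    using assms(2) by (auto simp: is_path_def)
  fix i assume i: "Suc i < length (rev p)"
  define k where "k = length p - Suc (Suc i)"
  have "Suc k < length p" using i by (simp add: k_def)
  then have "E (p ! k) (p ! Suc k)" using assms(2) by (simp add: is_path_def)
  moreover have "rev p ! i = p ! Suc k" "rev p ! Suc i = p ! k"
    using i by (auto simp: rev_nth k_def Suc_diff_Suc)
  ultimately show "E (rev p ! i) (rev p ! Suc i)" using simple_graph_sym[OF assms(1)] by metis
qed

lemma is_path_drop: "is_path V E p \<Longrightarrow> i < length p \<Longrightarrow> is_path V E (drop i p)"
  unfolding is_path_def using set_drop_subset[of i p] by (auto simp: nth_drop)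

lemma is_path_take: "is_path V E p \<Longrightarrow> 0 < k \<Longrightarrow> is_path V E (take k p)"
  unfolding is_path_def using set_take_subset[of k p] by (auto simp: nth_take)

lemma is_path_append:
  assumes "is_path V E p" "is_path V E q" "set p \<inter> set q = {}" "E (last p) (hd q)"
  shows "is_path V E (p @ q)"
  unfolding is_path_def
proof (intro conjI allI impI)
  show "p @ q \<noteq> []" "distinct (p @ q)" "set (p @ q) \<subseteq> V"
    using assms by (auto simp: is_path_def)
  have "p \<noteq> []" "q \<noteq> []" using assms by (auto simp: is_path_def)
  fix i assume i: "Suc i < length (p @ q)"
  consider "Suc i < length p" | "Suc i = length p" | "length p \<le> i" by linarith
  then show "E ((p @ q) ! i) ((p @ q) ! Suc i)"
  proof cases
    case 1
    then show ?thesis using assms(1) by (simp add: nth_append is_path_def)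
  next
    case 2
    then have "i = length p - 1" by simp
    then show ?thesis using assms(4) \<open>p \<noteq> []\<close> \<open>q \<noteq> []\<close>
      by (simp add: nth_append last_conv_nth hd_conv_nth)
  next
    case 3
    then have "Suc (i - length p) < length q" using i by simp
    then have "E (q ! (i - length p)) (q ! Suc (i - length p))"
      using assms(2) by (simp add: is_path_def)
    then show ?thesis using 3 by (simp add: nth_append Suc_diff_le)
  qed
qed

lemma is_path_Cons:
  assumes "is_path V E q" "w \<in> V" "w \<notin> set q" "E w (hd q)"
  shows "is_path V E (w # q)"
proof -
  have "is_path V E [w]" using assms(2) by (simp add: is_path_def)
  with assms show ?thesis using is_path_append[of V E "[w]" q] by simp
qed

lemma length_path_le_card:
  "simple_graph V E \<Longrightarrow> is_path V E p \<Longrightarrow> length p \<le> card V"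
  unfolding is_path_def simple_graph_def by (metis card_mono distinct_card)

lemma finite_path_lengths:
  "simple_graph V E \<Longrightarrow> finite {length p | p. is_path V E p \<and> P p}"
  by (rule finite_subset[of _ "{..card V}"]) (auto dest: length_path_le_card)

lemma length_path_le_tau:
  "simple_graph V E \<Longrightarrow> is_path V E p \<Longrightarrow> length p \<le> tau V E (hd p)"
  unfolding tau_def by (rule Max_ge[OF finite_path_lengths]) auto

lemma tau_attained:
  assumes "simple_graph V E" "v \<in> V"
  obtains p where "is_path V E p" "hd p = v" "length p = tau V E v"
proof -
  have "is_path V E [v]" using assms(2) by (simp add: is_path_def)
  then have "{length p | p. is_path V E p \<and> hd p = v} \<noteq> {}" by force
  from Max_in[OF finite_path_lengths[OF assms(1)] this] show ?thesis
    using that unfolding tau_def by force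
qed

lemma tau_nth_ge:
  assumes "simple_graph V E" "is_path V E p" "i < length p"
  shows "Suc i \<le> tau V E (p ! i)" and "length p - i \<le> tau V E (p ! i)"
proof -
  have "is_path V E (rev (take (Suc i) p))"
    using is_path_rev[OF assms(1) is_path_take[OF assms(2)]] by simp
  moreover have "hd (rev (take (Suc i) p)) = p ! i"
    using assms(3) by (simp add: hd_rev take_Suc_conv_app_nth)
  ultimately show "Suc i \<le> tau V E (p ! i)"
    using length_path_le_tau[OF assms(1)] assms(3) by fastforce
  have "is_path V E (drop i p)" "hd (drop i p) = p ! i"
    using is_path_drop[OF assms(2)] assms(3) by (auto simp: hd_drop_conv_nth)
  then show "length p - i \<le> tau V E (p ! i)"
    using length_path_le_tau[OF assms(1)] by fastforce
qed

lemma tau_neighbour_of_path_ge: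
  assumes "simple_graph V E" "is_path V E p" "i < length p"
    and "w \<in> V" "w \<notin> set p" "E w (p ! i)"
  shows "i + 2 \<le> tau V E w" and "length p - i + 1 \<le> tau V E w"
proof -
  have "is_path V E (w # rev (take (Suc i) p))"
    using assms is_path_rev[OF assms(1) is_path_take[OF assms(2)], of "Suc i"]
      set_take_subset[of "Suc i" p]
    by (intro is_path_Cons) (auto simp: hd_rev take_Suc_conv_app_nth)
  then show "i + 2 \<le> tau V E w"
    using length_path_le_tau[OF assms(1)] assms(3) by fastforce
  have "is_path V E (w # drop i p)"
    using assms is_path_drop[OF assms(2)] set_drop_subset[of i p]
    by (intro is_path_Cons) (auto simp: hd_drop_conv_nth)
  then show "length p - i + 1 \<le> tau V E w"
    using length_path_le_tau[OF assms(1)] by fastforce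
qed

text \<open>Going from \<open>p\<^sub>a\<^sub>+\<^sub>1\<close> up to \<open>p\<^sub>b\<close>, across the chord and back down to \<open>p\<^sub>0\<close>.\<close>

lemma tau_after_chord_ge:
  assumes "simple_graph V E" "is_path V E p" "a < b" "b < length p" "E (p ! a) (p ! b)"
  shows "Suc b \<le> tau V E (p ! Suc a)"
proof -
  define q1 where "q1 = take (b - a) (drop (Suc a) p)"
  define q2 where "q2 = rev (take (Suc a) p)"
  have "distinct p" using assms(2) by (simp add: is_path_def)
  have p1: "is_path V E q1"
    unfolding q1_def using is_path_take[OF is_path_drop[OF assms(2)]] assms(3,4) by simp
  have p2: "is_path V E q2"
    unfolding q2_def using is_path_rev[OF assms(1) is_path_take[OF assms(2)]] by simp
  have "set q1 \<inter> set q2 = {}"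
    unfolding q1_def q2_def
    using set_take_subset[of "b - a" "drop (Suc a) p"]
      set_take_disj_set_drop_if_distinct[OF \<open>distinct p\<close>, of "Suc a" "Suc a"]
    by auto
  moreover have "last q1 = p ! b" "hd q1 = p ! Suc a" "hd q2 = p ! a"
    unfolding q1_def q2_def using assms(3,4)
    by (simp_all add: last_conv_nth hd_drop_conv_nth hd_rev take_Suc_conv_app_nth)
  ultimately have "is_path V E (q1 @ q2)" "hd (q1 @ q2) = p ! Suc a"
    using is_path_append[OF p1 p2] p1 assms(5) simple_graph_sym[OF assms(1)]
    by (auto simp: is_path_def)
  moreover have "length (q1 @ q2) = Suc b" unfolding q1_def q2_def using assms(3,4) by simp
  ultimately show ?thesis using length_path_le_tau[OF assms(1)] by metis
qed

lemma longest_path_exists: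
  assumes "simple_graph V E" "v \<in> V"
  obtains P where "is_path V E P" "\<And>p. is_path V E p \<Longrightarrow> length p \<le> length P"
proof -
  have "is_path V E [v]" using assms(2) by (simp add: is_path_def)
  moreover have "\<forall>p. is_path V E p \<longrightarrow> length p < Suc (card V)"
    using length_path_le_card[OF assms(1)] by (simp add: less_Suc_eq_le)
  ultimately show ?thesis
    using that Lattices_Big.ex_has_greatest_nat[of "is_path V E" "[v]" length] by blast
qed

lemma connected_graph_edge_leaving:
  assumes "connected_graph V E" "S \<subseteq> V" "x \<in> S" "w \<in> V" "w \<notin> S"
  obtains u v where "u \<in> V" "u \<notin> S" "v \<in> S" "E u v"
proof -
  obtain q where q: "is_path V E q" "hd q = w" "last q = x"
    using assms unfolding connected_graph_def by blast
  have crossing: "\<exists>k. Suc k < length q \<and> q ! k \<notin> S \<and> q ! Suc k \<in> S"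
    if "q \<noteq> []" "hd q \<notin> S" "last q \<in> S" for q :: "'a list"
    using that
  proof (induction q)
    case (Cons y q)
    then show ?case
      by (cases "q = []"; cases "hd q \<in> S")
        (fastforce simp: hd_conv_nth intro: exI[of _ 0] exI[of _ "Suc _"])+
  qed simp
  have "q \<noteq> []" using q(1) by (simp add: is_path_def)
  with crossing[of q] obtain k where "Suc k < length q" "q ! k \<notin> S" "q ! Suc k \<in> S"
    using q(2,3) assms(3,5) by blast
  moreover have "q ! k \<in> V" using q(1) \<open>Suc k < length q\<close> by (auto simp: is_path_def)
  moreover have "E (q ! k) (q ! Suc k)" using q(1) \<open>Suc k < length q\<close> by (simp add: is_path_def)
  ultimately show ?thesis using that by blast
qed

lemma card_superlevel_set_le:
  assumes "finite V" "\<And>v. v \<in> V \<Longrightarrow> f v \<le> L"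
    and "\<And>v. v \<in> V \<Longrightarrow> card {u \<in> V. f u = f v} \<le> (2::nat)"
  shows "card {u \<in> V. t \<le> f u} \<le> 2 * (Suc L - t)"
proof -
  have fibre_le: "card {u \<in> V. f u = c} \<le> 2" for c
  proof (cases "\<exists>v\<in>V. f v = c")
    case True
    then show ?thesis using assms(3) by blast
  next
    case False
    then have "{u \<in> V. f u = c} = {}" by blast
    then show ?thesis by (metis card.empty zero_le)
  qed
  have "card {u \<in> V. t \<le> f u} \<le> card (\<Union>c\<in>{t..L}. {u \<in> V. f u = c})"
    using assms(1,2) by (intro card_mono) auto
  also have "\<dots> \<le> (\<Sum>c\<in>{t..L}. card {u \<in> V. f u = c})" by (rule card_UN_le) simp
  also have "\<dots> \<le> (\<Sum>c\<in>{t..L}. 2)" by (rule sum_mono) (rule fibre_le)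
  finally show ?thesis by (simp add: mult.commute)
qed

locale no_triple_detour =
  fixes V :: "'a set" and E :: "'a \<Rightarrow> 'a \<Rightarrow> bool" and P :: "'a list"
  assumes simple: "simple_graph V E"
    and repetitions_le_2: "\<And>v. v \<in> V \<Longrightarrow> card {u \<in> V. tau V E u = tau V E v} \<le> 2"
    and longest: "is_path V E P" "\<And>p. is_path V E p \<Longrightarrow> length p \<le> length P"
begin

lemma tau_le_length: "v \<in> V \<Longrightarrow> tau V E v \<le> length P"
  using longest(2) by (metis simple tau_attained)

lemma distinct_P: "distinct P"
  using longest(1) by (simp add: is_path_def)

lemma tau_superlevel_set_eq:
  assumes "length P + 2 \<le> 2 * t" "t \<le> length P"
  shows "{v \<in> V. t \<le> tau V E v} = (!) P ` ({..length P - t} \<union> {t - 1..<length P})"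
    (is "?H = (!) P ` ?I")
proof (rule sym, rule card_seteq)
  have "finite V" using simple by (simp add: simple_graph_def)
  then show "finite ?H" by simp
  have I_bound: "?I \<subseteq> {..<length P}" using assms by auto
  show "(!) P ` ?I \<subseteq> ?H"
  proof
    fix v assume "v \<in> (!) P ` ?I"
    then obtain i where i: "i \<in> ?I" "v = P ! i" by blast
    then have "i < length P" using I_bound by blast
    then have "P ! i \<in> V" "Suc i \<le> tau V E (P ! i)" "length P - i \<le> tau V E (P ! i)"
      using longest(1) tau_nth_ge[OF simple longest(1)] by (auto simp: is_path_def)
    moreover have "i \<le> length P - t \<or> t - 1 \<le> i"
      using i(1) unfolding Un_iff atMost_iff atLeastLessThan_iff by blast
    ultimately show "v \<in> ?H" using i(2) assms(2) by auto
  qed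
  have "card ?I = 2 * (Suc (length P) - t)" using assms by (subst card_Un_disjoint) auto
  moreover have "inj_on ((!) P) ?I"
    using distinct_P I_bound by (intro inj_on_nth) auto
  ultimately have "card ((!) P ` ?I) = 2 * (Suc (length P) - t)" by (simp add: card_image)
  moreover have "card ?H \<le> 2 * (Suc (length P) - t)"
    using card_superlevel_set_le[OF \<open>finite V\<close> tau_le_length repetitions_le_2] by simp
  ultimately show "card ?H \<le> card ((!) P ` ?I)" by linarith
qed

lemma high_tau_near_end:
  assumes "u \<in> V" "length P + 2 \<le> 2 * tau V E u"
  shows "\<exists>i<length P. u = P ! i \<and> (tau V E u \<le> Suc i \<or> i + tau V E u \<le> length P)"
proof -
  define t where "t = tau V E u"
  have "t \<le> length P" using tau_le_length[OF assms(1)] by (simp add: t_def)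
  have "length P + 2 \<le> 2 * t" using assms(2) by (simp add: t_def)
  then have "u \<in> (!) P ` ({..length P - t} \<union> {t - 1..<length P})"
    using tau_superlevel_set_eq[OF _ \<open>t \<le> length P\<close>] assms(1) by (auto simp: t_def)
  then obtain i where i: "i \<in> {..length P - t} \<union> {t - 1..<length P}" "u = P ! i" by blast
  then have "i < length P" "t \<le> Suc i \<or> i + t \<le> length P"
    using \<open>t \<le> length P\<close> \<open>length P + 2 \<le> 2 * t\<close> by auto
  with i(2) show ?thesis unfolding t_def[symmetric] by blast
qed

lemma no_long_chord_upper:
  assumes "a + 2 \<le> b" "b < length P" "length P \<le> a + b + 1" "E (P ! a) (P ! b)"
  shows False
proof -
  define t where "t = tau V E (P ! Suc a)"
  have "Suc b \<le> t"
    unfolding t_def using tau_after_chord_ge[OF simple longest(1)] assms by simp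
  moreover have "P ! Suc a \<in> V" using longest(1) assms(1,2) by (auto simp: is_path_def)
  moreover have "length P + 2 \<le> 2 * t" using \<open>Suc b \<le> t\<close> assms(1,3) by linarith
  ultimately obtain i where "i < length P" "P ! Suc a = P ! i"
    and "t \<le> Suc i \<or> i + t \<le> length P"
    using high_tau_near_end unfolding t_def by blast
  moreover have "i = Suc a"
    using calculation(1,2) distinct_P assms(1,2) by (simp add: nth_eq_iff_index_eq)
  ultimately show False using \<open>Suc b \<le> t\<close> assms(1,3) by linarith
qed

lemma no_triple_detour_rev: "no_triple_detour V E (rev P)"
  using simple repetitions_le_2 is_path_rev[OF simple longest(1)] longest(2)
  by unfold_locales simp_all

lemma no_long_chord:
  assumes "a + 2 \<le> b" "b < length P" "E (P ! a) (P ! b)"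
  shows False
proof (cases "length P \<le> a + b + 1")
  case True
  then show False using no_long_chord_upper assms by blast
next
  case False
  define a' b' where "a' = length P - Suc b" and "b' = length P - Suc a"
  have "rev P ! a' = P ! b" "rev P ! b' = P ! a"
    using assms(1,2) by (simp_all add: rev_nth a'_def b'_def)
  then have "E (rev P ! a') (rev P ! b')" using assms(3) simple_graph_sym[OF simple] by simp
  moreover have "a' + 2 \<le> b'" "b' < length (rev P)" "length (rev P) \<le> a' + b' + 1"
    using False assms(1,2) by (simp_all add: a'_def b'_def)
  ultimately show False
    using no_triple_detour.no_long_chord_upper[OF no_triple_detour_rev] by blast
qed

lemma hamiltonian:
  assumes "connected_graph V E"
  shows "set P = V"
proof (rule ccontr)
  assume "set P \<noteq> V"
  moreover have "set P \<subseteq> V" "P \<noteq> []" using longest(1) by (auto simp: is_path_def)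
  ultimately obtain w where "w \<in> V" "w \<notin> set P" by blast
  with connected_graph_edge_leaving[OF assms \<open>set P \<subseteq> V\<close> list.set_sel(1)[OF \<open>P \<noteq> []\<close>]]
  obtain u v where u: "u \<in> V" "u \<notin> set P" and "v \<in> set P" "E u v" by blast
  then obtain i where i: "i < length P" "E u (P ! i)" by (auto simp: in_set_conv_nth)
  have "i + 2 \<le> tau V E u" "length P - i + 1 \<le> tau V E u"
    using tau_neighbour_of_path_ge[OF simple longest(1) i(1) u i(2)] by simp_all
  then have "length P + 2 \<le> 2 * tau V E u" using i(1) by linarith
  then show False using high_tau_near_end[OF u(1)] u(2) by (auto simp: in_set_conv_nth)
qed

lemma is_path_graph_if_connected:
  assumes "connected_graph V E"
  shows "is_path_graph V E"
  unfolding is_path_graph_def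
proof (intro exI conjI allI impI)
  show "distinct P" "set P = V" by (fact distinct_P) (fact hamiltonian[OF assms])
  fix i j assume "i < length P" "j < length P"
  show "E (P ! i) (P ! j) \<longleftrightarrow> j = Suc i \<or> i = Suc j"
  proof
    assume "E (P ! i) (P ! j)"
    moreover have "i \<noteq> j" using calculation simple by (auto simp: simple_graph_def)
    ultimately consider "j = Suc i \<or> i = Suc j" | "i + 2 \<le> j" | "j + 2 \<le> i" by linarith
    then show "j = Suc i \<or> i = Suc j"
    proof cases
      case 2
      then show ?thesis using no_long_chord \<open>j < length P\<close> \<open>E (P ! i) (P ! j)\<close> by blast
    next
      case 3
      then show ?thesis using no_long_chord \<open>i < length P\<close> \<open>E (P ! i) (P ! j)\<close>
          simple_graph_sym[OF simple] by blast
    qed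
  next
    assume "j = Suc i \<or> i = Suc j"
    then show "E (P ! i) (P ! j)"
      using longest(1) simple_graph_sym[OF simple] \<open>i < length P\<close> \<open>j < length P\<close>
      by (auto simp: is_path_def)
  qed
qed

end

theorem theorem1p10:
  fixes V :: "'a set" and E :: "'a \<Rightarrow> 'a \<Rightarrow> bool"
  assumes "simple_graph V E"
    and "connected_graph V E"
    and "\<not> is_path_graph V E"
  shows "\<exists>v\<in>V. card {u \<in> V. tau V E u = tau V E v} \<ge> 3"
proof (rule ccontr)
  assume "\<not> ?thesis"
  then have repetitions_le_2: "card {u \<in> V. tau V E u = tau V E v} \<le> 2" if "v \<in> V" for v
    using that by force
  obtain v where "v \<in> V" using assms(2) by (auto simp: connected_graph_def)
  then obtain P where "is_path V E P" "\<And>p. is_path V E p \<Longrightarrow> length p \<le> length P"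
    using longest_path_exists[OF assms(1)] by blast
  then interpret no_triple_detour V E P
    using assms(1) repetitions_le_2 by unfold_locales
  show False using is_path_graph_if_connected[OF assms(2)] assms(3) by contradiction
qed

end
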